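(* There exists an absolute constant $L$ such that for all $\omega=(\alpha^+,\alpha^-,\gamma_1,\delta)$ and $\tilde\omega=(\tilde\alpha^+,\tilde\alpha^-,\tilde\gamma_1,\tilde\delta)$ in $\hat\Omega$ and all $z\in\mathbb{C}$, $$\left|\mathsf{E}_\omega(z)-\mathsf{E}_{\tilde\omega}(z)\right|\le e^{|\gamma_1||z|+5\delta|z|^2}\left(e^{|\gamma_1-\tilde\gamma_1||z|+\frac{|\delta-\tilde\delta|}{2}|z|^2}-1\right)+|z|\left(\sum_{i\ge1}\left[|\alpha_i^+-\tilde\alpha_i^+|^3+|\alpha_i^--\tilde\alpha_i^-|^3\right]\right)^{1/3}e^{|\tilde\gamma_1||z|+\frac{\tilde\delta}{2}|z|^2+L\left(|z|(\delta^{1/2}+\tilde\delta^{1/2})+1\right)^3}.$$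
   Context: $\hat\Omega$ is the set of $(\alpha^+,\alpha^-,\gamma_1,\delta)$ with $\alpha^\pm=(\alpha_1^\pm\ge\alpha_2^\pm\ge\dots\ge0)$ non-increasing sequences of non-negative reals, $\gamma_1\in\mathbb{R}$, $\delta\ge0$, and $\sum_i(\alpha_i^+)^2+\sum_i(\alpha_i^-)^2\le\delta$. For such a point set $\gamma_2=\delta-\sum_i(\alpha_i^+)^2-\sum_i(\alpha_i^-)^2$ and $$\mathsf{E}_\omega(z)=e^{-\gamma_1 z-\frac{\gamma_2}{2}z^2}\prod_{i\ge1}e^{z\alpha_i^+}(1-z\alpha_i^+)\prod_{i\ge1}e^{-z\alpha_i^-}(1+z\alpha_i^-).$$ *)

theory Defs
  imports "HOL-Analysis.Analysis"
begin

type_synonym omega = "(nat \<Rightarrow> real) \<times> (nat \<Rightarrow> real) \<times> real \<times> real"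

text \<open>The parameter set Omega-hat: (alpha+, alpha-, gamma1, delta), sequences indexed from 0.\<close>
definition OmegaHat :: "omega set" where
  "OmegaHat = {(ap, am, g1, d).
     decseq ap \<and> decseq am \<and> (\<forall>i. ap i \<ge> 0) \<and> (\<forall>i. am i \<ge> 0) \<and> d \<ge> 0 \<and>
     summable (\<lambda>i. (ap i)\<^sup>2) \<and> summable (\<lambda>i. (am i)\<^sup>2) \<and>
     (\<Sum>i. (ap i)\<^sup>2) + (\<Sum>i. (am i)\<^sup>2) \<le> d}"

definition gamma2 :: "omega \<Rightarrow> real" where
  "gamma2 \<omega> = (case \<omega> of (ap, am, g1, d) \<Rightarrow> d - (\<Sum>i. (ap i)\<^sup>2) - (\<Sum>i. (am i)\<^sup>2))"

definition Efun :: "omega \<Rightarrow> complex \<Rightarrow> complex" where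
  "Efun \<omega> z = (case \<omega> of (ap, am, g1, d) \<Rightarrow>
     exp (- of_real g1 * z - of_real (gamma2 \<omega>) / 2 * z\<^sup>2)
     * (\<Prod>i. exp (z * of_real (ap i)) * (1 - z * of_real (ap i)))
     * (\<Prod>i. exp (- z * of_real (am i)) * (1 + z * of_real (am i))))"

end

theory Submission
  imports Defs "HOL-Complex_Analysis.Weierstrass_Factorization"
begin

text \<open>
  With the Weierstrass factor \<open>E\<^sub>2(w) = (1 - w) exp (w + w\<^sup>2/2)\<close> one has
  \<open>E(z) = exp (- \<gamma>\<^sub>1 z - \<delta> z\<^sup>2/2) \<Prod> E\<^sub>2(z \<alpha>\<^sup>+\<^sub>i) \<Prod> E\<^sub>2(- z \<alpha>\<^sup>-\<^sub>i)\<close>: the factors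
  \<open>exp (w\<^sup>2/2)\<close> turn \<open>\<gamma>\<^sub>2\<close> into \<open>\<delta>\<close>. Since \<open>|E\<^sub>2(w)| \<le> exp |w|\<^sup>2\<close> and
  \<open>E\<^sub>2'(w) = - w\<^sup>2 exp (w + w\<^sup>2/2)\<close>, the products are bounded by \<open>exp (|z|\<^sup>2 \<delta>)\<close>, and comparing
  them factor by factor, their difference is at most \<open>|z| s Y exp Y exp (T + T\<^sup>2/2)\<close>, where
  \<open>s = sup\<^sub>i |\<alpha>\<^sub>i - \<alpha>'\<^sub>i|\<close>, \<open>T = |z| (\<surd>\<delta> + \<surd>\<delta>')\<close> and \<open>Y = |z|\<^sup>2 (\<delta> + \<delta>') \<le> T\<^sup>2\<close>.
  The supremum is bounded by the \<open>l\<^sup>3\<close> norm and \<open>Y exp Y exp (T + T\<^sup>2/2) \<le> exp ((T + 1)\<^sup>3)\<close>,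
  so \<open>L = 1\<close> works. The Gaussian prefactors give the first term through
  \<open>|exp a - exp b| \<le> exp |a| (exp |a - b| - 1)\<close>.
\<close>

section \<open>The exponential and the elementary factors\<close>

lemma norm_exp_minus_one_le:
  fixes x :: "'a :: {real_normed_field, banach}"
  shows "norm (exp x - 1) \<le> exp (norm x) - 1"
proof -
  have x_sums: "(\<lambda>n. x ^ Suc n /\<^sub>R fact (Suc n)) sums (exp x - 1)"
    using exp_converges[of x] by (subst sums_Suc_iff) simp
  have norm_sums: "(\<lambda>n. norm (x ^ Suc n /\<^sub>R fact (Suc n))) sums (exp (norm x) - 1)"
    using exp_converges[of "norm x"] by (subst sums_Suc_iff) (simp add: norm_power)
  show ?thesis
    using summable_norm[OF sums_summable[OF norm_sums]] x_sums norm_sums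
    by (simp add: sums_iff)
qed

lemma norm_exp_diff_le:
  fixes a b :: "'a :: {real_normed_field, banach}"
  shows "norm (exp a - exp b) \<le> exp (norm a) * (exp (norm (a - b)) - 1)"
proof -
  have "exp a - exp b = exp a * (1 - exp (b - a))"
    by (simp add: algebra_simps flip: exp_add)
  hence "norm (exp a - exp b) = norm (exp a) * norm (exp (b - a) - 1)"
    by (simp add: norm_mult norm_minus_commute)
  also have "\<dots> \<le> exp (norm a) * (exp (norm (a - b)) - 1)"
    using norm_exp_minus_one_le[of "b - a"]
    by (intro mult_mono norm_exp) (simp_all add: norm_minus_commute)
  finally show ?thesis .
qed

lemma weierstrass_factor_1_eq: "weierstrass_factor 1 w = (1 - w) * exp w"
  by (simp add: weierstrass_factor_def)

lemma weierstrass_factor_2_eq: "weierstrass_factor 2 w = (1 - w) * exp (w + w\<^sup>2 / 2)"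
  by (simp add: weierstrass_factor_def numeral_2_eq_2)

lemma weierstrass_factor_2_eq_mult: "weierstrass_factor 2 w = weierstrass_factor 1 w * exp (w\<^sup>2 / 2)"
  unfolding weierstrass_factor_1_eq weierstrass_factor_2_eq by (simp add: exp_add)

lemma norm_weierstrass_factor_1_le: "norm (weierstrass_factor 1 w) \<le> exp (norm w ^ 2 / 2)"
proof -
  have "(norm (1 - w))\<^sup>2 = 1 - 2 * Re w + (norm w)\<^sup>2"
    unfolding cmod_power2 by (simp add: power2_eq_square algebra_simps)
  also have "\<dots> \<le> exp (- 2 * Re w + (norm w)\<^sup>2)"
    using exp_ge_add_one_self[of "- 2 * Re w + (norm w)\<^sup>2"] by (simp add: algebra_simps)
  also have "\<dots> = (exp (- Re w + (norm w)\<^sup>2 / 2))\<^sup>2"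
    by (simp add: power2_eq_square flip: exp_add)
  finally have "norm (1 - w) \<le> exp (- Re w + (norm w)\<^sup>2 / 2)"
    by (rule power2_le_imp_le) simp
  hence "norm (weierstrass_factor 1 w) \<le> exp (- Re w + (norm w)\<^sup>2 / 2) * exp (Re w)"
    unfolding weierstrass_factor_1_eq norm_mult by (intro mult_mono) auto
  thus ?thesis
    by (simp flip: exp_add)
qed

lemma norm_weierstrass_factor_2_le: "norm (weierstrass_factor 2 w) \<le> exp (norm w ^ 2)"
proof -
  have "norm (weierstrass_factor 2 w) \<le> exp (norm w ^ 2 / 2) * exp (norm w ^ 2 / 2)"
    unfolding weierstrass_factor_2_eq_mult norm_mult
    using norm_exp[of "w\<^sup>2 / 2"]
    by (intro mult_mono norm_weierstrass_factor_1_le) (simp_all add: norm_divide norm_power)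
  thus ?thesis
    by (simp flip: exp_add)
qed

lemma weierstrass_factor_2_lipschitz:
  assumes "norm u \<le> R" "norm v \<le> R"
  shows "norm (weierstrass_factor 2 u - weierstrass_factor 2 v) \<le> R\<^sup>2 * exp (R + R\<^sup>2 / 2) * norm (u - v)"
proof (rule field_differentiable_bound[of "cball 0 R"])
  fix w :: complex
  assume w: "w \<in> cball 0 R"
  show "(weierstrass_factor 2 has_field_derivative - (w\<^sup>2 * exp (w + w\<^sup>2 / 2))) (at w within cball 0 R)"
    unfolding weierstrass_factor_2_eq [abs_def]
    by (rule derivative_eq_intros refl | simp add: algebra_simps power2_eq_square)+
  have "Re (w + w\<^sup>2 / 2) \<le> norm w + norm w ^ 2 / 2"
    using complex_Re_le_cmod[of w] complex_Re_le_cmod[of "w\<^sup>2"] by (simp add: norm_power)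
  also have "\<dots> \<le> R + R\<^sup>2 / 2"
    using w by (intro add_mono divide_right_mono power_mono) auto
  finally have "norm (exp (w + w\<^sup>2 / 2)) \<le> exp (R + R\<^sup>2 / 2)"
    by simp
  moreover have "norm w ^ 2 \<le> R\<^sup>2"
    using w by (intro power_mono) auto
  ultimately show "norm (- (w\<^sup>2 * exp (w + w\<^sup>2 / 2))) \<le> R\<^sup>2 * exp (R + R\<^sup>2 / 2)"
    unfolding norm_minus_cancel norm_mult norm_power by (intro mult_mono) auto
qed (use assms in auto)

section \<open>Comparing products\<close>

lemma norm_prod_diff_le_exp_sum:
  fixes a b :: "'i \<Rightarrow> 'a :: real_normed_field"
  assumes "\<And>i. i \<in> I \<Longrightarrow> norm (a i) \<le> exp (m i)" "\<And>i. i \<in> I \<Longrightarrow> norm (b i) \<le> exp (m i)"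
    and "\<And>i. i \<in> I \<Longrightarrow> 0 \<le> m i"
  shows "norm ((\<Prod>i\<in>I. a i) - (\<Prod>i\<in>I. b i)) \<le> exp (\<Sum>i\<in>I. m i) * (\<Sum>i\<in>I. norm (a i - b i))"
proof -
  \<comment> \<open>rescaling the factors into the unit ball, where \<open>norm_prod_diff\<close> applies\<close>
  define e :: "'i \<Rightarrow> 'a" where "e i = of_real (exp (m i))" for i
  have "(\<Prod>i\<in>I. e i) \<noteq> 0"
    by (cases "finite I") (simp_all add: e_def)
  hence "(\<Prod>i\<in>I. a i) - (\<Prod>i\<in>I. b i) = (\<Prod>i\<in>I. e i) * ((\<Prod>i\<in>I. a i / e i) - (\<Prod>i\<in>I. b i / e i))"
    by (simp add: right_diff_distrib prod_dividef)
  also have "norm \<dots> \<le> exp (\<Sum>i\<in>I. m i) * (\<Sum>i\<in>I. norm (a i / e i - b i / e i))"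
  proof -
    have "norm ((\<Prod>i\<in>I. a i / e i) - (\<Prod>i\<in>I. b i / e i)) \<le> (\<Sum>i\<in>I. norm (a i / e i - b i / e i))"
      using assms(1,2) by (intro norm_prod_diff) (simp_all add: e_def norm_divide)
    moreover have "norm (\<Prod>i\<in>I. e i) \<le> exp (\<Sum>i\<in>I. m i)"
      by (cases "finite I") (simp_all add: e_def exp_sum flip: prod_norm)
    ultimately show ?thesis
      unfolding norm_mult by (intro mult_mono) auto
  qed
  also have "(\<Sum>i\<in>I. norm (a i / e i - b i / e i)) \<le> (\<Sum>i\<in>I. norm (a i - b i))"
  proof (intro sum_mono)
    fix i assume "i \<in> I"
    hence "norm (a i - b i) * 1 \<le> norm (a i - b i) * exp (m i)"
      using assms(3) by (intro mult_left_mono) auto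
    thus "norm (a i / e i - b i / e i) \<le> norm (a i - b i)"
      by (simp add: e_def diff_divide_distrib [symmetric] norm_divide divide_le_eq)
  qed
  finally show ?thesis
    by (simp add: mult_left_mono)
qed

lemma has_prod_norm_le_exp_suminf:
  fixes a :: "nat \<Rightarrow> 'a :: {real_normed_field, banach}"
  assumes "a has_prod A" "\<And>i. norm (a i) \<le> exp (m i)" "summable m" "\<And>i. 0 \<le> m i"
  shows "norm A \<le> exp (suminf m)"
proof (rule LIMSEQ_le_const2)
  show "(\<lambda>n. norm (\<Prod>i<n. a i)) \<longlonglongrightarrow> norm A"
    by (intro tendsto_norm has_prod_imp_tendsto' assms)
  have "norm (\<Prod>i<n. a i) \<le> exp (suminf m)" for n
  proof -
    have "norm (\<Prod>i<n. a i) \<le> (\<Prod>i<n. exp (m i))"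
      unfolding prod_norm [symmetric] by (intro prod_mono) (simp add: assms)
    also have "\<dots> = exp (\<Sum>i<n. m i)"
      by (simp add: exp_sum)
    also have "\<dots> \<le> exp (suminf m)"
      using assms by (simp add: sum_le_suminf)
    finally show ?thesis .
  qed
  thus "\<exists>N. \<forall>n\<ge>N. norm (\<Prod>i<n. a i) \<le> exp (suminf m)"
    by blast
qed

lemma has_prod_diff_norm_le:
  fixes a b :: "nat \<Rightarrow> 'a :: {real_normed_field, banach}"
  assumes "a has_prod A" "b has_prod B"
    and "\<And>i. norm (a i) \<le> exp (m i)" "\<And>i. norm (b i) \<le> exp (m i)" "\<And>i. 0 \<le> m i" "summable m"
    and "\<And>i. norm (a i - b i) \<le> c i" "summable c"
  shows "norm (A - B) \<le> exp (suminf m) * suminf c"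
proof (rule LIMSEQ_le_const2)
  show "(\<lambda>n. norm ((\<Prod>i<n. a i) - (\<Prod>i<n. b i))) \<longlonglongrightarrow> norm (A - B)"
    by (intro tendsto_norm tendsto_diff has_prod_imp_tendsto' assms)
  have c_nonneg: "0 \<le> c i" for i
    using assms(7) norm_ge_zero order_trans by blast
  have "norm ((\<Prod>i<n. a i) - (\<Prod>i<n. b i)) \<le> exp (suminf m) * suminf c" for n
  proof -
    have "norm ((\<Prod>i<n. a i) - (\<Prod>i<n. b i)) \<le> exp (\<Sum>i<n. m i) * (\<Sum>i<n. norm (a i - b i))"
      by (rule norm_prod_diff_le_exp_sum) (simp_all add: assms)
    also have "\<dots> \<le> exp (suminf m) * suminf c"
    proof (intro mult_mono)
      show "exp (\<Sum>i<n. m i) \<le> exp (suminf m)"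
        using assms by (simp add: sum_le_suminf)
      show "(\<Sum>i<n. norm (a i - b i)) \<le> suminf c"
        using assms c_nonneg by (intro order_trans[OF sum_mono sum_le_suminf]) auto
    qed (auto intro: sum_nonneg)
    finally show ?thesis .
  qed
  thus "\<exists>N. \<forall>n\<ge>N. norm ((\<Prod>i<n. a i) - (\<Prod>i<n. b i)) \<le> exp (suminf m) * suminf c"
    by blast
qed

lemma norm_mult_diff_le_exp:
  fixes a a' b b' :: "'a :: real_normed_algebra"
  assumes "norm (a - a') \<le> K * U * exp U" "norm (b - b') \<le> K * V * exp V"
    and "norm b \<le> exp V'" "norm a' \<le> exp U'" "U + V' \<le> Y" "V + U' \<le> Y"
    and "0 \<le> K" "0 \<le> U" "0 \<le> V"
  shows "norm (a * b - a' * b') \<le> K * (U + V) * exp Y"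
proof -
  have "norm (a * b - a' * b') \<le> norm (a - a') * norm b + norm a' * norm (b - b')"
    using norm_triangle_ineq[of "(a - a') * b" "a' * (b - b')"] norm_mult_ineq[of "a - a'" b]
      norm_mult_ineq[of a' "b - b'"]
    by (simp add: algebra_simps)
  also have "\<dots> \<le> K * U * exp U * exp V' + exp U' * (K * V * exp V)"
    using assms by (intro add_mono mult_mono) auto
  also have "\<dots> = K * U * exp (U + V') + K * V * exp (V + U')"
    by (simp add: exp_add mult_ac)
  also have "\<dots> \<le> K * U * exp Y + K * V * exp Y"
    using assms by (intro add_mono mult_left_mono) auto
  finally show ?thesis
    by (simp add: algebra_simps)
qed

section \<open>Infinite products of genus-two factors\<close>

lemma convergent_prod_weierstrass_factor:
  fixes w :: "nat \<Rightarrow> complex"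
  assumes "summable (\<lambda>i. norm (w i) ^ Suc n)"
  shows "convergent_prod (\<lambda>i. weierstrass_factor n (w i))"
proof -
  have "eventually (\<lambda>i. norm (w i) ^ Suc n < (1 / 2) ^ Suc n) sequentially"
    using summable_LIMSEQ_zero[OF assms] by (rule order_tendstoD) simp
  hence "eventually (\<lambda>i. norm (w i) \<le> 1 / 2) sequentially"
    by eventually_elim (erule power_less_imp_less_base [THEN less_imp_le], simp)
  hence "eventually (\<lambda>i. norm (weierstrass_factor n (w i) - 1) \<le> 3 * norm (w i) ^ Suc n) sequentially"
    by eventually_elim (rule weierstrass_factor_bound)
  hence "summable (\<lambda>i. norm (weierstrass_factor n (w i) - 1))"
    by (intro summable_comparison_test_ev[OF _ summable_mult[OF assms]]) simp
  thus ?thesis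
    by (intro abs_convergent_prod_imp_convergent_prod summable_imp_abs_convergent_prod)
qed

lemma has_prod_weierstrass_factor_2:
  fixes w :: "nat \<Rightarrow> complex"
  assumes "summable (\<lambda>i. norm (w i) ^ 2)"
  shows "(\<lambda>i. weierstrass_factor 2 (w i)) has_prod
           ((\<Prod>i. weierstrass_factor 1 (w i)) * exp ((\<Sum>i. w i ^ 2) / 2))"
proof -
  have "(\<lambda>i. weierstrass_factor 1 (w i)) has_prod (\<Prod>i. weierstrass_factor 1 (w i))"
    using assms by (intro convergent_prod_has_prod convergent_prod_weierstrass_factor) (simp add: numeral_2_eq_2)
  moreover have "summable (\<lambda>i. w i ^ 2)"
    using assms by (intro summable_norm_cancel [of "\<lambda>i. w i ^ 2"]) (simp add: norm_power)
  hence "(\<lambda>i. w i ^ 2 / 2) sums ((\<Sum>i. w i ^ 2) / 2)"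
    by (intro sums_divide summable_sums)
  hence "(\<lambda>i. exp (w i ^ 2 / 2)) has_prod exp ((\<Sum>i. w i ^ 2) / 2)"
    unfolding has_prod_def by (intro disjI1 sums_imp_has_prod_exp)
  ultimately show ?thesis
    unfolding weierstrass_factor_2_eq_mult by (rule has_prod_mult)
qed

lemma norm_prodinf_weierstrass_factor_2_le:
  fixes w :: "nat \<Rightarrow> complex"
  assumes "summable (\<lambda>i. norm (w i) ^ 2)"
  shows "norm (\<Prod>i. weierstrass_factor 2 (w i)) \<le> exp (\<Sum>i. norm (w i) ^ 2)"
  using has_prod_weierstrass_factor_2[OF assms] assms
  by (intro has_prod_norm_le_exp_suminf) (auto simp: has_prod_iff norm_weierstrass_factor_2_le)

lemma norm_prodinf_weierstrass_factor_2_diff_le: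
  fixes w v :: "nat \<Rightarrow> complex"
  assumes "summable (\<lambda>i. norm (w i) ^ 2)" "summable (\<lambda>i. norm (v i) ^ 2)"
    and "\<And>i. norm (w i) \<le> T" "\<And>i. norm (v i) \<le> T" "\<And>i. norm (w i - v i) \<le> s"
  defines "W \<equiv> \<Sum>i. norm (w i) ^ 2 + norm (v i) ^ 2"
  shows "norm ((\<Prod>i. weierstrass_factor 2 (w i)) - (\<Prod>i. weierstrass_factor 2 (v i)))
           \<le> s * exp (T + T\<^sup>2 / 2) * W * exp W"
proof -
  define m where "m = (\<lambda>i. norm (w i) ^ 2 + norm (v i) ^ 2)"
  have sm: "summable m"
    unfolding m_def using assms(1,2) by (rule summable_add)
  have "norm (weierstrass_factor 2 (w i) - weierstrass_factor 2 (v i)) \<le> s * exp (T + T\<^sup>2 / 2) * m i" for i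
  proof -
    define R where "R = max (norm (w i)) (norm (v i))"
    have R: "0 \<le> R" "R \<le> T" "R\<^sup>2 \<le> m i"
      using assms(3,4)[of i] by (auto simp: R_def m_def max_def)
    have "norm (weierstrass_factor 2 (w i) - weierstrass_factor 2 (v i)) \<le> R\<^sup>2 * exp (R + R\<^sup>2 / 2) * norm (w i - v i)"
      by (rule weierstrass_factor_2_lipschitz) (simp_all add: R_def)
    also have "\<dots> \<le> m i * exp (T + T\<^sup>2 / 2) * s"
    proof (intro mult_mono assms(5))
      show "exp (R + R\<^sup>2 / 2) \<le> exp (T + T\<^sup>2 / 2)"
        using R by (simp add: add_mono power_mono)
    qed (use R in \<open>auto simp: m_def\<close>)
    finally show ?thesis
      by (simp add: mult_ac)
  qed
  moreover have "(\<lambda>i. weierstrass_factor 2 (w i)) has_prod (\<Prod>i. weierstrass_factor 2 (w i))"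
    "(\<lambda>i. weierstrass_factor 2 (v i)) has_prod (\<Prod>i. weierstrass_factor 2 (v i))"
    using has_prod_weierstrass_factor_2[OF assms(1)] has_prod_weierstrass_factor_2[OF assms(2)]
    by (simp_all add: has_prod_iff)
  moreover have "norm (weierstrass_factor 2 (w i)) \<le> exp (m i)" "norm (weierstrass_factor 2 (v i)) \<le> exp (m i)"
    for i
    by (rule order_trans[OF norm_weierstrass_factor_2_le], simp add: m_def)+
  ultimately have "norm ((\<Prod>i. weierstrass_factor 2 (w i)) - (\<Prod>i. weierstrass_factor 2 (v i)))
           \<le> exp (suminf m) * (\<Sum>i. s * exp (T + T\<^sup>2 / 2) * m i)"
    using sm summable_add[OF assms(1,2)] by (intro has_prod_diff_norm_le) (simp_all add: m_def)
  also have "\<dots> = s * exp (T + T\<^sup>2 / 2) * W * exp W"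
    using sm by (simp add: W_def m_def suminf_mult mult_ac)
  finally show ?thesis .
qed

lemma norm_mult_of_real_power2:
  fixes c :: "'a :: real_normed_div_algebra"
  shows "norm (c * of_real x) ^ 2 = norm c ^ 2 * x\<^sup>2"
  by (simp add: norm_mult power_mult_distrib)

lemma prodinf_weierstrass_factor_2_of_real:
  assumes "summable (\<lambda>i. (a i)\<^sup>2)"
  shows "(\<Prod>i. weierstrass_factor 2 (c * of_real (a i)))
           = (\<Prod>i. weierstrass_factor 1 (c * of_real (a i))) * exp (c\<^sup>2 / 2 * of_real (\<Sum>i. (a i)\<^sup>2))"
proof -
  have "(\<lambda>i. (c * of_real (a i))\<^sup>2) sums (c\<^sup>2 * of_real (\<Sum>i. (a i)\<^sup>2))"
    using sums_mult[OF sums_of_real[OF summable_sums[OF assms]], of "c\<^sup>2"]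
    by (simp add: power_mult_distrib)
  moreover have "summable (\<lambda>i. norm (c * of_real (a i)) ^ 2)"
    unfolding norm_mult_of_real_power2 using assms by (rule summable_mult)
  ultimately show ?thesis
    using has_prod_weierstrass_factor_2 by (simp add: has_prod_iff sums_iff)
qed

lemma norm_prodinf_weierstrass_factor_2_of_real_le:
  assumes "summable (\<lambda>i. (a i)\<^sup>2)"
  shows "norm (\<Prod>i. weierstrass_factor 2 (c * of_real (a i))) \<le> exp (norm c ^ 2 * (\<Sum>i. (a i)\<^sup>2))"
  using norm_prodinf_weierstrass_factor_2_le[of "\<lambda>i. c * of_real (a i)"] assms
  by (simp add: norm_mult_of_real_power2 summable_mult suminf_mult)

lemma norm_prodinf_weierstrass_factor_2_of_real_diff_le:
  fixes a b :: "nat \<Rightarrow> real" and c :: complex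
  assumes "summable (\<lambda>i. (a i)\<^sup>2)" "summable (\<lambda>i. (b i)\<^sup>2)"
    and "\<And>i. \<bar>a i\<bar> \<le> B" "\<And>i. \<bar>b i\<bar> \<le> B" "\<And>i. \<bar>a i - b i\<bar> \<le> s"
  defines "W \<equiv> norm c ^ 2 * ((\<Sum>i. (a i)\<^sup>2) + (\<Sum>i. (b i)\<^sup>2))"
  shows "norm ((\<Prod>i. weierstrass_factor 2 (c * of_real (a i))) - (\<Prod>i. weierstrass_factor 2 (c * of_real (b i))))
           \<le> norm c * s * exp (norm c * B + (norm c * B)\<^sup>2 / 2) * W * exp W"
proof -
  have "norm (c * of_real (a i)) \<le> norm c * B" "norm (c * of_real (b i)) \<le> norm c * B"
    "norm (c * of_real (a i) - c * of_real (b i)) \<le> norm c * s" for i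
    using assms(3-5)[of i] by (simp_all add: norm_mult mult_left_mono flip: right_diff_distrib of_real_diff)
  moreover have "(\<Sum>i. norm (c * of_real (a i)) ^ 2 + norm (c * of_real (b i)) ^ 2) = W"
  proof -
    have "(\<Sum>i. norm (c * of_real (a i)) ^ 2 + norm (c * of_real (b i)) ^ 2)
           = (\<Sum>i. norm c ^ 2 * ((a i)\<^sup>2 + (b i)\<^sup>2))"
      by (simp add: norm_mult_of_real_power2 distrib_left)
    also have "\<dots> = W"
      using assms(1,2) by (simp add: W_def suminf_mult summable_add suminf_add)
    finally show ?thesis .
  qed
  ultimately show ?thesis
    using assms(1,2)
      norm_prodinf_weierstrass_factor_2_diff_le[where T = "norm c * B" and s = "norm c * s"
        and w = "\<lambda>i. c * of_real (a i)" and v = "\<lambda>i. c * of_real (b i)"]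
    by (simp add: norm_mult_of_real_power2 summable_mult)
qed

lemma summable_abs_diff_power3:
  fixes a b :: "nat \<Rightarrow> real"
  assumes "summable (\<lambda>i. (a i)\<^sup>2)" "summable (\<lambda>i. (b i)\<^sup>2)" "\<And>i. \<bar>a i - b i\<bar> \<le> B"
  shows "summable (\<lambda>i. \<bar>a i - b i\<bar> ^ 3)"
proof (rule summable_comparison_test')
  show "summable (\<lambda>i. 2 * B * ((a i)\<^sup>2 + (b i)\<^sup>2))"
    using assms(1,2) by (intro summable_mult summable_add)
  fix i
  have "(a i - b i)\<^sup>2 \<le> 2 * ((a i)\<^sup>2 + (b i)\<^sup>2)"
    using zero_le_power2[of "a i + b i"] by (simp add: power2_eq_square algebra_simps)
  hence "\<bar>a i - b i\<bar> * (a i - b i)\<^sup>2 \<le> B * (2 * ((a i)\<^sup>2 + (b i)\<^sup>2))"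
    using assms(3)[of i] by (intro mult_mono) auto
  moreover have "norm (\<bar>a i - b i\<bar> ^ 3) = \<bar>a i - b i\<bar> * (a i - b i)\<^sup>2"
    by (simp add: power2_eq_square power3_eq_cube abs_mult_self_eq)
  ultimately show "norm (\<bar>a i - b i\<bar> ^ 3) \<le> 2 * B * ((a i)\<^sup>2 + (b i)\<^sup>2)"
    by (simp add: mult_ac)
qed

lemma le_suminf_powr_one_third:
  fixes f :: "nat \<Rightarrow> real"
  assumes "summable f" "\<And>i. 0 \<le> f i" "0 \<le> x" "x ^ 3 \<le> f i"
  shows "x \<le> (\<Sum>i. f i) powr (1 / 3)"
proof -
  have sum_nonneg: "0 \<le> (\<Sum>i. f i)"
    using assms(1,2) by (rule suminf_nonneg)
  have "x = root 3 (x ^ 3)"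
    using assms(3) by (simp add: real_root_power_cancel)
  also have "\<dots> \<le> root 3 (\<Sum>i. f i)"
    using assms(4) sum_le_suminf[OF assms(1), of "{i}"] assms(2) by simp
  also have "\<dots> = (\<Sum>i. f i) powr (1 / 3)"
    using sum_nonneg by (simp add: root_powr_inverse)
  finally show ?thesis .
qed

lemma mult_exp_le_exp_plus_one_cube:
  fixes Y T :: real
  assumes "0 \<le> Y" "Y \<le> T\<^sup>2" "0 \<le> T"
  shows "Y * exp Y * exp (T + T\<^sup>2 / 2) \<le> exp ((T + 1) ^ 3)"
proof -
  have "Y * exp Y * exp (T + T\<^sup>2 / 2) \<le> exp Y * exp Y * exp (T + T\<^sup>2 / 2)"
    using exp_ge_add_one_self[of Y] by (intro mult_right_mono) (linarith, simp_all)
  also have "\<dots> = exp (2 * Y + T + T\<^sup>2 / 2)"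
    by (simp flip: exp_add)
  also have "\<dots> \<le> exp ((T + 1) ^ 3)"
  proof -
    have "(T + 1) ^ 3 = T * T\<^sup>2 + 3 * T\<^sup>2 + 3 * T + 1"
      by (simp add: power2_eq_square power3_eq_cube algebra_simps)
    moreover have "0 \<le> T * T\<^sup>2"
      using assms(3) by simp
    ultimately have "2 * Y + T + T\<^sup>2 / 2 \<le> (T + 1) ^ 3"
      using assms by linarith
    thus ?thesis
      by simp
  qed
  finally show ?thesis .
qed

lemma norm_quadratic_exponent_le:
  fixes g d :: real and z :: complex
  shows "norm (- of_real g * z - of_real d / 2 * z\<^sup>2) \<le> \<bar>g\<bar> * norm z + \<bar>d\<bar> / 2 * (norm z)\<^sup>2"
proof -
  have "norm (- of_real g * z - of_real d / 2 * z\<^sup>2) \<le> norm (of_real g * z) + norm (of_real d / 2 * z\<^sup>2)"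
    using norm_triangle_ineq4[of "- of_real g * z" "of_real d / 2 * z\<^sup>2"] by simp
  thus ?thesis
    by (simp add: norm_mult norm_divide norm_power)
qed

lemma norm_exp_quadratic_diff_le:
  fixes g d g' d' :: real and z :: complex
  assumes "0 \<le> d"
  shows "norm (exp (- of_real g * z - of_real d / 2 * z\<^sup>2) - exp (- of_real g' * z - of_real d' / 2 * z\<^sup>2))
           \<le> exp (\<bar>g\<bar> * norm z + d / 2 * (norm z)\<^sup>2)
               * (exp (\<bar>g - g'\<bar> * norm z + \<bar>d - d'\<bar> / 2 * (norm z)\<^sup>2) - 1)"
proof -
  have "(- of_real g * z - of_real d / 2 * z\<^sup>2) - (- of_real g' * z - of_real d' / 2 * z\<^sup>2)
          = - of_real (g - g') * z - of_real (d - d') / 2 * z\<^sup>2"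
    by (simp add: field_simps)
  hence "norm ((- of_real g * z - of_real d / 2 * z\<^sup>2) - (- of_real g' * z - of_real d' / 2 * z\<^sup>2))
           \<le> \<bar>g - g'\<bar> * norm z + \<bar>d - d'\<bar> / 2 * (norm z)\<^sup>2"
    by (simp only: norm_quadratic_exponent_le)
  thus ?thesis
    using norm_quadratic_exponent_le[of g z d] assms
    by (intro order_trans[OF norm_exp_diff_le] mult_mono) auto
qed

section \<open>The functions E on the parameter space\<close>

lemma OmegaHatD:
  assumes "(ap, am, g1, d) \<in> OmegaHat"
  shows "\<And>i. 0 \<le> ap i" "\<And>i. 0 \<le> am i" "summable (\<lambda>i. (ap i)\<^sup>2)" "summable (\<lambda>i. (am i)\<^sup>2)"
    and "(\<Sum>i. (ap i)\<^sup>2) + (\<Sum>i. (am i)\<^sup>2) \<le> d" "0 \<le> d"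
  using assms by (auto simp: OmegaHat_def)

lemma OmegaHat_le_sqrt:
  assumes "(ap, am, g1, d) \<in> OmegaHat"
  shows "ap i \<le> sqrt d" "am i \<le> sqrt d"
proof -
  note \<Omega> = OmegaHatD[OF assms]
  have "(ap i)\<^sup>2 \<le> (\<Sum>i. (ap i)\<^sup>2)" "(am i)\<^sup>2 \<le> (\<Sum>i. (am i)\<^sup>2)"
    using sum_le_suminf[OF \<Omega>(3), of "{i}"] sum_le_suminf[OF \<Omega>(4), of "{i}"] by simp_all
  moreover have "0 \<le> (\<Sum>i. (ap i)\<^sup>2)" "0 \<le> (\<Sum>i. (am i)\<^sup>2)"
    using \<Omega>(3,4) by (simp_all add: suminf_nonneg)
  ultimately show "ap i \<le> sqrt d" "am i \<le> sqrt d"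
    using \<Omega>(5) by (intro real_le_rsqrt; linarith)+
qed

lemma OmegaHat_abs_diff_le_cube_sum:
  fixes ap am ap' am' :: "nat \<Rightarrow> real"
  assumes \<omega>: "(ap, am, g1, d) \<in> OmegaHat" and \<omega>': "(ap', am', g1', d') \<in> OmegaHat"
  defines "s \<equiv> (\<Sum>i. \<bar>ap i - ap' i\<bar> ^ 3 + \<bar>am i - am' i\<bar> ^ 3) powr (1 / 3)"
  shows "\<bar>ap i - ap' i\<bar> \<le> s" "\<bar>am i - am' i\<bar> \<le> s"
proof -
  note \<Omega> = OmegaHatD[OF \<omega>] and \<Omega>' = OmegaHatD[OF \<omega>']
  have "\<bar>ap j - ap' j\<bar> \<le> sqrt d + sqrt d'" "\<bar>am j - am' j\<bar> \<le> sqrt d + sqrt d'" for j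
    using OmegaHat_le_sqrt[OF \<omega>, of j] OmegaHat_le_sqrt[OF \<omega>', of j] \<Omega>(1,2)[of j] \<Omega>'(1,2)[of j]
      real_sqrt_ge_zero[OF \<Omega>(6)] real_sqrt_ge_zero[OF \<Omega>'(6)]
    unfolding abs_le_iff by linarith+
  hence "summable (\<lambda>i. \<bar>ap i - ap' i\<bar> ^ 3 + \<bar>am i - am' i\<bar> ^ 3)"
    using \<Omega>(3,4) \<Omega>'(3,4) by (intro summable_add summable_abs_diff_power3)
  thus "\<bar>ap i - ap' i\<bar> \<le> s" "\<bar>am i - am' i\<bar> \<le> s"
    unfolding s_def by (intro le_suminf_powr_one_third[where i = i]; simp)+
qed

definition genus2_product :: "(nat \<Rightarrow> real) \<Rightarrow> (nat \<Rightarrow> real) \<Rightarrow> complex \<Rightarrow> complex" where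
  "genus2_product ap am z = (\<Prod>i. weierstrass_factor 2 (z * of_real (ap i))) * (\<Prod>i. weierstrass_factor 2 (- z * of_real (am i)))"

lemma Efun_eq_genus2_product:
  assumes "(ap, am, g1, d) \<in> OmegaHat"
  shows "Efun (ap, am, g1, d) z = exp (- of_real g1 * z - of_real d / 2 * z\<^sup>2) * genus2_product ap am z"
proof -
  note \<Omega> = OmegaHatD[OF assms]
  define Sp Sm where "Sp = (\<Sum>i. (ap i)\<^sup>2)" and "Sm = (\<Sum>i. (am i)\<^sup>2)"
  have "Efun (ap, am, g1, d) z = exp (- of_real g1 * z - of_real (gamma2 (ap, am, g1, d)) / 2 * z\<^sup>2)
      * (\<Prod>i. weierstrass_factor 1 (z * of_real (ap i))) * (\<Prod>i. weierstrass_factor 1 (- z * of_real (am i)))"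
    unfolding Efun_def weierstrass_factor_1_eq by (simp add: mult.commute)
  also have "exp (- of_real g1 * z - of_real (gamma2 (ap, am, g1, d)) / 2 * z\<^sup>2)
      = exp (- of_real g1 * z - of_real d / 2 * z\<^sup>2) * exp (z\<^sup>2 / 2 * of_real Sp) * exp ((- z)\<^sup>2 / 2 * of_real Sm)"
    by (simp add: gamma2_def Sp_def Sm_def field_simps flip: exp_add)
  finally show ?thesis
    unfolding genus2_product_def prodinf_weierstrass_factor_2_of_real[OF \<Omega>(3)]
      prodinf_weierstrass_factor_2_of_real[OF \<Omega>(4)]
    by (simp add: Sp_def Sm_def mult_ac)
qed

lemma norm_genus2_product_le:
  assumes "summable (\<lambda>i. (ap i)\<^sup>2)" "summable (\<lambda>i. (am i)\<^sup>2)"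
  shows "norm (genus2_product ap am z) \<le> exp (norm z ^ 2 * ((\<Sum>i. (ap i)\<^sup>2) + (\<Sum>i. (am i)\<^sup>2)))"
proof -
  have "norm (genus2_product ap am z) \<le> exp (norm z ^ 2 * (\<Sum>i. (ap i)\<^sup>2)) * exp (norm (- z) ^ 2 * (\<Sum>i. (am i)\<^sup>2))"
    unfolding genus2_product_def norm_mult
    by (intro mult_mono norm_prodinf_weierstrass_factor_2_of_real_le assms) auto
  thus ?thesis
    by (simp add: distrib_left flip: exp_add)
qed

lemma norm_genus2_product_diff_le_exp:
  fixes ap am ap' am' :: "nat \<Rightarrow> real" and z :: complex
  assumes "summable (\<lambda>i. (ap i)\<^sup>2)" "summable (\<lambda>i. (am i)\<^sup>2)"
    and "summable (\<lambda>i. (ap' i)\<^sup>2)" "summable (\<lambda>i. (am' i)\<^sup>2)"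
    and "\<And>i. \<bar>ap i\<bar> \<le> B" "\<And>i. \<bar>ap' i\<bar> \<le> B" "\<And>i. \<bar>am i\<bar> \<le> B" "\<And>i. \<bar>am' i\<bar> \<le> B"
    and "\<And>i. \<bar>ap i - ap' i\<bar> \<le> s" "\<And>i. \<bar>am i - am' i\<bar> \<le> s"
  defines "Y \<equiv> norm z ^ 2 * ((\<Sum>i. (ap i)\<^sup>2) + (\<Sum>i. (am i)\<^sup>2) + (\<Sum>i. (ap' i)\<^sup>2) + (\<Sum>i. (am' i)\<^sup>2))"
  shows "norm (genus2_product ap am z - genus2_product ap' am' z)
           \<le> norm z * s * exp (norm z * B + (norm z * B)\<^sup>2 / 2) * Y * exp Y"
proof -
  define r K where "r = norm z" and "K = norm z * s * exp (norm z * B + (norm z * B)\<^sup>2 / 2)"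
  define Sp Sm Sp' Sm' where "Sp = (\<Sum>i. (ap i)\<^sup>2)" and "Sm = (\<Sum>i. (am i)\<^sup>2)"
    and "Sp' = (\<Sum>i. (ap' i)\<^sup>2)" and "Sm' = (\<Sum>i. (am' i)\<^sup>2)"
  define Pp Pm Pp' Pm' where "Pp = (\<Prod>i. weierstrass_factor 2 (z * of_real (ap i)))"
    and "Pm = (\<Prod>i. weierstrass_factor 2 (- z * of_real (am i)))"
    and "Pp' = (\<Prod>i. weierstrass_factor 2 (z * of_real (ap' i)))"
    and "Pm' = (\<Prod>i. weierstrass_factor 2 (- z * of_real (am' i)))"
  have S_nonneg: "0 \<le> Sp" "0 \<le> Sm" "0 \<le> Sp'" "0 \<le> Sm'"
    using assms(1-4) by (simp_all add: Sp_def Sm_def Sp'_def Sm'_def suminf_nonneg)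
  have K_nonneg: "0 \<le> K"
    using assms(9)[of 0] by (simp add: K_def)
  have dPp: "norm (Pp - Pp') \<le> K * (r\<^sup>2 * (Sp + Sp')) * exp (r\<^sup>2 * (Sp + Sp'))"
    using norm_prodinf_weierstrass_factor_2_of_real_diff_le[OF assms(1,3,5,6,9), of z]
    by (simp add: Pp_def Pp'_def K_def r_def Sp_def Sp'_def)
  have dPm: "norm (Pm - Pm') \<le> K * (r\<^sup>2 * (Sm + Sm')) * exp (r\<^sup>2 * (Sm + Sm'))"
    using norm_prodinf_weierstrass_factor_2_of_real_diff_le[OF assms(2,4,7,8,10), of "- z"]
    by (simp add: Pm_def Pm'_def K_def r_def Sm_def Sm'_def)
  have bP: "norm Pm \<le> exp (r\<^sup>2 * Sm)" "norm Pp' \<le> exp (r\<^sup>2 * Sp')"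
    using norm_prodinf_weierstrass_factor_2_of_real_le[OF assms(2), of "- z"]
      norm_prodinf_weierstrass_factor_2_of_real_le[OF assms(3), of z]
    by (simp_all add: Pm_def Pp'_def r_def Sm_def Sp'_def)
  have le_Y: "r\<^sup>2 * (Sp + Sp') + r\<^sup>2 * Sm \<le> Y" "r\<^sup>2 * (Sm + Sm') + r\<^sup>2 * Sp' \<le> Y"
    unfolding Y_def r_def distrib_left [symmetric] Sp_def [symmetric] Sm_def [symmetric]
      Sp'_def [symmetric] Sm'_def [symmetric]
    using S_nonneg by (intro mult_left_mono; simp)+
  have "norm (Pp * Pm - Pp' * Pm') \<le> K * (r\<^sup>2 * (Sp + Sp') + r\<^sup>2 * (Sm + Sm')) * exp Y"
    using S_nonneg K_nonneg by (intro norm_mult_diff_le_exp[OF dPp dPm bP le_Y]) auto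
  also have "r\<^sup>2 * (Sp + Sp') + r\<^sup>2 * (Sm + Sm') = Y"
    by (simp add: Y_def r_def Sp_def Sm_def Sp'_def Sm'_def algebra_simps)
  finally show ?thesis
    by (simp add: genus2_product_def Pp_def Pm_def Pp'_def Pm'_def K_def)
qed

lemma norm_genus2_product_diff_le:
  assumes \<omega>: "(ap, am, g1, d) \<in> OmegaHat" and \<omega>': "(ap', am', g1', d') \<in> OmegaHat"
    and "\<And>i. \<bar>ap i - ap' i\<bar> \<le> s" "\<And>i. \<bar>am i - am' i\<bar> \<le> s"
  shows "norm (genus2_product ap am z - genus2_product ap' am' z)
           \<le> norm z * s * exp ((norm z * (sqrt d + sqrt d') + 1) ^ 3)"
proof -
  note \<Omega> = OmegaHatD[OF \<omega>] and \<Omega>' = OmegaHatD[OF \<omega>']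
  define B T where "B = sqrt d + sqrt d'" and "T = norm z * (sqrt d + sqrt d')"
  define Y Y' where "Y = norm z ^ 2 * ((\<Sum>i. (ap i)\<^sup>2) + (\<Sum>i. (am i)\<^sup>2) + (\<Sum>i. (ap' i)\<^sup>2) + (\<Sum>i. (am' i)\<^sup>2))"
    and "Y' = norm z ^ 2 * (d + d')"
  have s_nonneg: "0 \<le> s"
    using assms(3)[of 0] by simp
  have "\<bar>ap i\<bar> \<le> B" "\<bar>ap' i\<bar> \<le> B" "\<bar>am i\<bar> \<le> B" "\<bar>am' i\<bar> \<le> B" for i
    using OmegaHat_le_sqrt[OF \<omega>, of i] OmegaHat_le_sqrt[OF \<omega>', of i] \<Omega>(1,2,6) \<Omega>'(1,2,6)
    by (auto simp: B_def intro: add_increasing add_increasing2)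
  hence "norm (genus2_product ap am z - genus2_product ap' am' z) \<le> norm z * s * exp (T + T\<^sup>2 / 2) * Y * exp Y"
    using norm_genus2_product_diff_le_exp[OF \<Omega>(3,4) \<Omega>'(3,4) _ _ _ _ assms(3,4)]
    by (simp add: B_def T_def Y_def)
  also have "\<dots> \<le> norm z * s * (Y' * exp Y' * exp (T + T\<^sup>2 / 2))"
  proof -
    have "0 \<le> Y" "Y \<le> Y'"
      using \<Omega>(3-5) \<Omega>'(3-5) by (auto simp: Y_def Y'_def suminf_nonneg intro!: mult_left_mono)
    hence "Y * exp Y \<le> Y' * exp Y'"
      by (intro mult_mono) auto
    hence "norm z * s * exp (T + T\<^sup>2 / 2) * (Y * exp Y) \<le> norm z * s * exp (T + T\<^sup>2 / 2) * (Y' * exp Y')"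
      using s_nonneg by (intro mult_left_mono) auto
    thus ?thesis
      by (simp only: mult_ac)
  qed
  also have "\<dots> \<le> norm z * s * exp ((T + 1) ^ 3)"
  proof (intro mult_left_mono mult_exp_le_exp_plus_one_cube)
    have "d + d' \<le> (sqrt d + sqrt d')\<^sup>2"
      using \<Omega>(6) \<Omega>'(6) by (simp add: power2_eq_square algebra_simps)
    thus "Y' \<le> T\<^sup>2"
      by (simp add: Y'_def T_def power_mult_distrib mult_left_mono)
  qed (use \<Omega>(6) \<Omega>'(6) s_nonneg in \<open>auto simp: Y'_def T_def\<close>)
  finally show ?thesis
    by (simp add: T_def)
qed

lemma norm_Efun_diff_le:
  fixes z :: complex
  assumes \<omega>: "(ap, am, g1, d) \<in> OmegaHat" and \<omega>': "(ap', am', g1', d') \<in> OmegaHat"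
    and "\<And>i. \<bar>ap i - ap' i\<bar> \<le> s" "\<And>i. \<bar>am i - am' i\<bar> \<le> s"
  shows "cmod (Efun (ap, am, g1, d) z - Efun (ap', am', g1', d') z)
           \<le> exp (\<bar>g1\<bar> * cmod z + 5 * d * (cmod z)\<^sup>2)
               * (exp (\<bar>g1 - g1'\<bar> * cmod z + \<bar>d - d'\<bar> / 2 * (cmod z)\<^sup>2) - 1)
             + cmod z * s * exp (\<bar>g1'\<bar> * cmod z + d' / 2 * (cmod z)\<^sup>2 + (cmod z * (sqrt d + sqrt d') + 1) ^ 3)"
proof -
  note \<Omega> = OmegaHatD[OF \<omega>] and \<Omega>' = OmegaHatD[OF \<omega>']
  define r where "r = cmod z"
  define A A' where "A = - of_real g1 * z - of_real d / 2 * z\<^sup>2" and "A' = - of_real g1' * z - of_real d' / 2 * z\<^sup>2"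
  define P P' where "P = genus2_product ap am z" and "P' = genus2_product ap' am' z"
  define \<Delta> where "\<Delta> = \<bar>g1 - g1'\<bar> * r + \<bar>d - d'\<bar> / 2 * r\<^sup>2"
  have "norm (exp A - exp A') \<le> exp (\<bar>g1\<bar> * r + d / 2 * r\<^sup>2) * (exp \<Delta> - 1)"
    unfolding A_def A'_def \<Delta>_def r_def by (rule norm_exp_quadratic_diff_le[OF \<Omega>(6)])
  moreover have "norm P \<le> exp (r\<^sup>2 * d)"
    unfolding P_def r_def using \<Omega>(5)
    by (intro order_trans[OF norm_genus2_product_le[OF \<Omega>(3,4)]]) (simp add: mult_left_mono)
  ultimately have "norm ((exp A - exp A') * P) \<le> exp (\<bar>g1\<bar> * r + d / 2 * r\<^sup>2) * (exp \<Delta> - 1) * exp (r\<^sup>2 * d)"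
    unfolding norm_mult by (intro mult_mono) (auto simp: \<Delta>_def r_def)
  also have "\<dots> = exp (\<bar>g1\<bar> * r + d / 2 * r\<^sup>2 + r\<^sup>2 * d) * (exp \<Delta> - 1)"
    by (simp only: exp_add mult_ac)
  also have "\<dots> \<le> exp (\<bar>g1\<bar> * r + 5 * d * r\<^sup>2) * (exp \<Delta> - 1)"
    using \<Omega>(6) by (intro mult_right_mono) (auto simp: \<Delta>_def r_def)
  finally have first: "norm ((exp A - exp A') * P) \<le> exp (\<bar>g1\<bar> * r + 5 * d * r\<^sup>2) * (exp \<Delta> - 1)" .
  have "norm (exp A' * (P - P')) \<le> exp (\<bar>g1'\<bar> * r + d' / 2 * r\<^sup>2) * (r * s * exp ((r * (sqrt d + sqrt d') + 1) ^ 3))"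
    unfolding norm_mult A'_def P_def P'_def r_def
    using norm_quadratic_exponent_le[where g = g1' and d = d' and z = z] \<Omega>'(6) norm_genus2_product_diff_le[OF assms, of z]
    by (intro mult_mono order_trans[OF norm_exp]) (auto simp: r_def)
  hence second: "norm (exp A' * (P - P')) \<le> r * s * exp (\<bar>g1'\<bar> * r + d' / 2 * r\<^sup>2 + (r * (sqrt d + sqrt d') + 1) ^ 3)"
    by (simp add: exp_add mult_ac)
  have "Efun (ap, am, g1, d) z - Efun (ap', am', g1', d') z = (exp A - exp A') * P + exp A' * (P - P')"
    using Efun_eq_genus2_product[OF \<omega>] Efun_eq_genus2_product[OF \<omega>']
    by (simp add: A_def A'_def P_def P'_def algebra_simps)
  thus ?thesis
    using norm_triangle_le[OF add_mono[OF first second]] by (simp add: r_def \<Delta>_def)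
qed

theorem proposition5p1:
  shows "\<exists>L::real. \<forall>ap am g1 d ap' am' g1' d' (z::complex).
     (ap, am, g1, d) \<in> OmegaHat \<longrightarrow> (ap', am', g1', d') \<in> OmegaHat \<longrightarrow>
     cmod (Efun (ap, am, g1, d) z - Efun (ap', am', g1', d') z)
       \<le> exp (\<bar>g1\<bar> * cmod z + 5 * d * (cmod z)\<^sup>2)
           * (exp (\<bar>g1 - g1'\<bar> * cmod z + \<bar>d - d'\<bar> / 2 * (cmod z)\<^sup>2) - 1)
         + cmod z * ((\<Sum>i. \<bar>ap i - ap' i\<bar> ^ 3 + \<bar>am i - am' i\<bar> ^ 3) powr (1/3))
           * exp (\<bar>g1'\<bar> * cmod z + d' / 2 * (cmod z)\<^sup>2
                  + L * (cmod z * (sqrt d + sqrt d') + 1) ^ 3)"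
  by (intro exI[of _ 1] allI impI) (simp only: mult_1 norm_Efun_diff_le OmegaHat_abs_diff_le_cube_sum)

end
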